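(* Let $\theta\in[0,\pi)\setminus\{\pi/2\}$, $\kappa(\theta):=\gamma-\log2+\tan\theta$, and for $t\ge0$ define $$K_\theta(t):=\lim_{R\to\infty}\frac{1}{2\pi i}\int_{-iR}^{iR}e^{t\zeta}\big(\log\sqrt\zeta+\kappa(\theta)\big)^{-1}d\zeta$$ (integral along the imaginary axis). Then there is a bounded function $K^1_\theta\in C^\infty([0,\infty))$ such that for $t>0$ $$K_\theta(t)=-\frac1\pi\,\mathrm{Im}\left\{\int_1^\infty e^{-ty}\big(\log\sqrt y+i\pi/2+\kappa(\theta)\big)^{-1}dy\right\}+K^1_\theta(t)=2\int_1^\infty\frac{e^{-ty}}{(\log y+2\kappa(\theta))^2+\pi^2}\,dy+K^1_\theta(t).$$
   Context: $\gamma$ is the Euler–Mascheroni constant; $\sqrt\zeta$ and $\log\zeta$ denote the principal branches on $\mathbb C\setminus(-\infty,0]$, extended to the imaginary axis by continuity away from $0$ (at $\zeta=0$ the integrand is interpreted as its limit $0$). *)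

theory Defs
  imports "HOL-Analysis.Analysis"
begin

definition kappa :: "real \<Rightarrow> real" where
  "kappa \<theta> = euler_mascheroni - ln 2 + tan \<theta>"

definition K_integrand :: "real \<Rightarrow> real \<Rightarrow> complex \<Rightarrow> complex" where
  "K_integrand \<theta> t z =
     (if z = 0 then 0 else exp (of_real t * z) / (Ln (csqrt z) + of_real (kappa \<theta>)))"

text \<open>(1/(2 pi i)) times the integral from -iR to iR along the imaginary axis,
  parametrised as z = i y, dz = i dy, y in [-R, R].\<close>
definition K_partial :: "real \<Rightarrow> real \<Rightarrow> real \<Rightarrow> complex" where
  "K_partial \<theta> t R =
     (1 / (2 * of_real pi * \<i>)) * integral {-R..R} (\<lambda>y. K_integrand \<theta> t (\<i> * of_real y) * \<i>)"

end

theory Submission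
  imports Defs "HOL-Complex_Analysis.Complex_Analysis" "HOL-Real_Asymp.Real_Asymp"
begin

text \<open>
  Since \<open>Log \<surd>z = (Log z)/2\<close>, the integrand is \<open>f(z) = e\<^sup>t\<^sup>z / ((Log z)/2 + \<kappa>)\<close>, and
  \<open>f(cnj z) = cnj (f z)\<close> turns the integral over \<open>[-iR, iR]\<close> into \<open>(1/\<pi>) Im (i \<integral>\<^sub>0\<^sup>R f(iy) dy)\<close>.
  Cauchy's theorem on the rectangle with corners \<open>-X + i\<delta>\<close> and \<open>iR\<close> in the upper half-plane
  moves the path onto the negative real axis: as \<open>\<delta> \<rightarrow> 0\<close> and \<open>X \<rightarrow> \<infinity>\<close> the left edge vanishes
  (\<open>|f| \<le> 4/\<pi> e\<^sup>-\<^sup>t\<^sup>X\<close> there), the bottom edge tends to the integral of the boundary values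
  \<open>e\<^sup>-\<^sup>t\<^sup>s / (log \<surd>s + i\<pi>/2 + \<kappa>)\<close> over \<open>s > 0\<close> by dominated convergence, and the top edge is
  \<open>O(1 / (t log R))\<close> uniformly in \<open>X\<close>. The imaginary part of a boundary value is
  \<open>-2\<pi> e\<^sup>-\<^sup>t\<^sup>s / ((log s + 2\<kappa>)\<^sup>2 + \<pi>\<^sup>2)\<close>, and the piece over \<open>s \<in> [0, 1]\<close> is the bounded
  smooth function \<open>K\<^sup>1(t)\<close>: the density extends continuously by 0 to \<open>s = 0\<close>, so one may
  differentiate under the integral sign.
\<close>

section \<open>Cauchy's theorem on rectangles\<close>

lemma contour_integral_linepath_same_Im:
  assumes "a < b"
  shows "contour_integral (linepath (Complex a c) (Complex b c)) f =
           integral {a..b} (\<lambda>x. f (Complex x c))"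
proof -
  have "linepath (Complex a c) (Complex b c) = (+) (\<i> * of_real c) \<circ> linepath (of_real a) (of_real b)"
    by (simp add: fun_eq_iff linepath_def complex_eq_iff algebra_simps)
  hence "contour_integral (linepath (Complex a c) (Complex b c)) f =
           contour_integral (linepath (of_real a) (of_real b)) (\<lambda>z. f (z + \<i> * of_real c))"
    by (simp add: contour_integral_translate)
  also have "\<dots> = integral {a..b} (\<lambda>x. f (Complex x c))"
    using assms by (subst contour_integral_linepath_Reals_eq) (simp_all add: Complex_eq)
  finally show ?thesis .
qed

lemma has_contour_integral_rectpath:
  fixes f :: "complex \<Rightarrow> complex"
  assumes cont: "continuous_on (cbox (Complex x1 y1) (Complex x2 y2)) f" and "x1 < x2" "y1 < y2"
  shows "(f has_contour_integral
            integral {x1..x2} (\<lambda>x. f (Complex x y1)) + \<i> * integral {y1..y2} (\<lambda>y. f (Complex x2 y))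
          - integral {x1..x2} (\<lambda>x. f (Complex x y2)) - \<i> * integral {y1..y2} (\<lambda>y. f (Complex x1 y)))
         (rectpath (Complex x1 y1) (Complex x2 y2))"
proof -
  define a1 a2 a3 a4 where "a1 = Complex x1 y1" "a2 = Complex x2 y1" "a3 = Complex x2 y2" "a4 = Complex x1 y2"
  have seg: "(f has_contour_integral contour_integral (linepath u v) f) (linepath u v)"
    if "u \<in> cbox a1 a3" "v \<in> cbox a1 a3" for u v
    using closed_segment_subset[OF that convex_box(1)]
    by (intro has_contour_integral_integral contour_integrable_continuous_linepath
        continuous_on_subset[OF cont]) (simp add: a1_a2_a3_a4_def)
  have "(f has_contour_integral contour_integral (linepath a1 a2) f + (contour_integral (linepath a2 a3) f
      + (contour_integral (linepath a3 a4) f + contour_integral (linepath a4 a1) f))) (rectpath a1 a3)"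
    unfolding rectpath_def Let_def using assms(2,3)
    by (intro has_contour_integral_join valid_path_join)
       (auto simp: a1_a2_a3_a4_def in_cbox_complex_iff intro!: seg)
  moreover have "contour_integral (linepath a3 a4) f = - contour_integral (linepath a4 a3) f"
    "contour_integral (linepath a4 a1) f = - contour_integral (linepath a1 a4) f"
    by (metis contour_integral_reversepath reversepath_linepath valid_path_linepath)+
  moreover have "contour_integral (linepath a1 a2) f = integral {x1..x2} (\<lambda>x. f (Complex x y1))"
    "contour_integral (linepath a4 a3) f = integral {x1..x2} (\<lambda>x. f (Complex x y2))"
    using assms(2) unfolding a1_a2_a3_a4_def by (simp_all add: contour_integral_linepath_same_Im)
  moreover have "contour_integral (linepath a2 a3) f = \<i> * integral {y1..y2} (\<lambda>y. f (Complex x2 y))"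
    "contour_integral (linepath a1 a4) f = \<i> * integral {y1..y2} (\<lambda>y. f (Complex x1 y))"
    using assms(3) unfolding a1_a2_a3_a4_def by (simp_all add: contour_integral_linepath_same_Re)
  ultimately show ?thesis by (simp add: a1_a2_a3_a4_def algebra_simps)
qed

lemma Cauchy_theorem_rectangle_integrals:
  fixes f :: "complex \<Rightarrow> complex"
  assumes holf: "f holomorphic_on S" and "convex S"
    and sub: "cbox (Complex x1 y1) (Complex x2 y2) \<subseteq> S" and "x1 < x2" "y1 < y2"
  shows "integral {y1..y2} (\<lambda>y. f (Complex x2 y)) - integral {y1..y2} (\<lambda>y. f (Complex x1 y))
       = - \<i> * (integral {x1..x2} (\<lambda>x. f (Complex x y2)) - integral {x1..x2} (\<lambda>x. f (Complex x y1)))"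
proof -
  have "path_image (rectpath (Complex x1 y1) (Complex x2 y2)) \<subseteq> S"
    using path_image_rectpath_subset_cbox[of "Complex x1 y1" "Complex x2 y2"] sub assms(4,5) by simp
  hence "(f has_contour_integral 0) (rectpath (Complex x1 y1) (Complex x2 y2))"
    by (intro Cauchy_theorem_convex_simple[OF holf \<open>convex S\<close>]) auto
  moreover have "continuous_on (cbox (Complex x1 y1) (Complex x2 y2)) f"
    using holomorphic_on_imp_continuous_on[OF holf] sub by (rule continuous_on_subset)
  note has_contour_integral_rectpath[OF this assms(4,5)]
  ultimately have "\<i> * (integral {y1..y2} (\<lambda>y. f (Complex x2 y)) - integral {y1..y2} (\<lambda>y. f (Complex x1 y)))
      = integral {x1..x2} (\<lambda>x. f (Complex x y2)) - integral {x1..x2} (\<lambda>x. f (Complex x y1))"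
    by (auto dest: has_contour_integral_unique simp: algebra_simps)
  from arg_cong[OF this, of "(*) (- \<i>)"] show ?thesis by (simp add: mult.assoc[symmetric])
qed

lemma continuous_on_Ici_if_at_right:
  fixes f :: "real \<Rightarrow> 'a::topological_space"
  assumes "continuous_on {a<..} f" "(f \<longlongrightarrow> f a) (at_right a)"
  shows "continuous_on {a..} f"
  unfolding continuous_on_eq_continuous_within
proof
  fix x assume "x \<in> {a..}"
  show "continuous (at x within {a..}) f"
  proof (cases "x = a")
    case True
    thus ?thesis using assms(2) by (simp add: continuous_within at_within_Ici_at_right)
  next
    case False
    hence "isCont f x" using assms(1) \<open>x \<in> {a..}\<close> by (simp add: continuous_on_eq_continuous_at)
    thus ?thesis by (rule continuous_at_imp_continuous_within)
  qed
qed

lemma integrable_on_Ici_dominated: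
  fixes f :: "real \<Rightarrow> 'a::banach"
  assumes "continuous_on {a..} f" "\<And>x. a \<le> x \<Longrightarrow> norm (f x) \<le> g x" "g integrable_on {a..}"
  shows "f integrable_on {a..}"
proof (rule integrable_on_all_intervals_integrable_bound)
  fix l u :: real
  have "f integrable_on {a..} \<inter> cbox l u"
    by (simp add: Int_atLeastAtMost integrable_continuous_interval continuous_on_subset[OF assms(1)])
  thus "(\<lambda>x. if x \<in> {a..} then f x else 0) integrable_on cbox l u"
    by (simp only: integrable_restrict_Int)
qed (use assms in auto)

lemma integrable_exp_decay:
  fixes t :: real
  assumes "0 < t"
  shows "(\<lambda>s. C * exp (- (t * s))) integrable_on {a..}"
  using has_integral_mult_right[OF has_integral_exp_minus_to_infinity[OF assms, of a], of C]
  by (auto simp: integrable_on_def)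

text \<open>The value 0 at the origin, inherited from \<open>K_integrand\<close>, is also the limit along the imaginary axis
  (\<open>log_kernel_tendsto_origin\<close>).\<close>
definition log_kernel :: "real \<Rightarrow> real \<Rightarrow> complex \<Rightarrow> complex" where
  "log_kernel c t z = (if z = 0 then 0 else exp (of_real t * z) / (Ln z / 2 + of_real c))"

text \<open>The limit of \<open>log_kernel c t (-s + i\<epsilon>)\<close> as \<open>\<epsilon> \<rightarrow> 0+\<close>, for \<open>s > 0\<close>.\<close>
definition boundary_log_kernel :: "real \<Rightarrow> real \<Rightarrow> real \<Rightarrow> complex" where
  "boundary_log_kernel c t =
     (\<lambda>s. exp (- of_real (t * s)) / (of_real (ln (sqrt s)) + \<i> * of_real pi / 2 + of_real c))"

lemma Ln_csqrt: "z \<noteq> 0 \<Longrightarrow> Ln (csqrt z) = Ln z / 2"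
  using mpi_less_Im_Ln[of z] Im_Ln_le_pi[of z] pi_gt_zero
  by (simp add: csqrt_exp_Ln)

lemma K_integrand_eq_log_kernel: "K_integrand \<theta> t = log_kernel (kappa \<theta>) t"
  by (simp add: fun_eq_iff K_integrand_def log_kernel_def Ln_csqrt)

lemma Im_Ln_ge_pi_half:
  assumes "0 < Im z" "Re z \<le> 0"
  shows "pi / 2 \<le> Im (Ln z)"
proof (rule ccontr)
  assume "\<not> ?thesis"
  moreover have "0 < Im (Ln z)" using Im_Ln_pos_lt_imp[OF assms(1)] by simp
  ultimately have "0 < cos (Im (Ln z))" by (intro cos_gt_zero) auto
  moreover have "Re z = exp (Re (Ln z)) * cos (Im (Ln z))"
    using assms(1) by (metis Re_exp exp_Ln less_irrefl zero_complex.sel(2))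
  ultimately show False using assms(2) by (simp add: mult_le_0_iff)
qed

lemma Ln_half_plus_real_nonzero: "0 < Im z \<Longrightarrow> Ln z / 2 + of_real c \<noteq> 0"
  using Im_Ln_pos_lt_imp[of z] by (auto simp: complex_eq_iff)

lemma holomorphic_on_log_kernel: "log_kernel c t holomorphic_on {z. 0 < Im z}"
proof -
  have "(\<lambda>z. exp (of_real t * z) / (Ln z / 2 + of_real c)) holomorphic_on {z. 0 < Im z}"
    by (intro holomorphic_intros) (auto simp: complex_nonpos_Reals_iff Ln_half_plus_real_nonzero)
  thus ?thesis by (rule holomorphic_transform) (auto simp: log_kernel_def)
qed

lemma continuous_on_log_kernel_comp:
  assumes "continuous_on A g" "\<And>x. x \<in> A \<Longrightarrow> 0 < Im (g x)"
  shows "continuous_on A (\<lambda>x. log_kernel c t (g x))"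
  using continuous_on_compose2[OF holomorphic_on_imp_continuous_on[OF holomorphic_on_log_kernel] assms(1)]
    assms(2) by auto

lemma continuous_on_log_kernel_horizontal:
  "0 < y \<Longrightarrow> continuous_on A (\<lambda>s. log_kernel c t (Complex (- s) y))"
  by (rule continuous_on_log_kernel_comp) (auto simp: Complex_eq intro!: continuous_intros)

lemma continuous_on_log_kernel_vertical:
  "A \<subseteq> {0<..} \<Longrightarrow> continuous_on A (\<lambda>y. log_kernel c t (Complex x y))"
  by (rule continuous_on_log_kernel_comp) (auto simp: Complex_eq intro!: continuous_intros)

lemma norm_log_kernel_second_quadrant_le:
  assumes "0 \<le> s" "0 < y"
  shows "norm (log_kernel c t (Complex (- s) y)) \<le> 4 / pi * exp (- (t * s))"
proof -
  let ?D = "Ln (Complex (- s) y) / 2 + of_real c"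
  have "pi / 4 \<le> Im ?D" using Im_Ln_ge_pi_half[of "Complex (- s) y"] assms by simp
  also have "\<dots> \<le> norm ?D" using abs_Im_le_cmod by (rule order_trans[OF abs_ge_self])
  finally have "exp (- (t * s)) / norm ?D \<le> exp (- (t * s)) / (pi / 4)"
    using pi_gt_zero by (intro divide_left_mono mult_pos_pos) (auto simp: not_less[symmetric])
  thus ?thesis using assms(2) by (auto simp: log_kernel_def norm_divide mult.commute complex_eq_iff)
qed

lemma norm_log_kernel_le_far:
  assumes "0 < R" "R \<le> norm z" "0 < ln R / 2 + c"
  shows "norm (log_kernel c t z) \<le> exp (t * Re z) / (ln R / 2 + c)"
proof -
  have "z \<noteq> 0" using assms by auto
  hence "ln R / 2 + c \<le> Re (Ln z / 2 + of_real c)"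
    using assms by simp
  also have "\<dots> \<le> norm (Ln z / 2 + of_real c)" by (rule complex_Re_le_cmod)
  finally have "exp (t * Re z) / norm (Ln z / 2 + of_real c) \<le> exp (t * Re z) / (ln R / 2 + c)"
    using assms(3) by (intro divide_left_mono mult_pos_pos) auto
  thus ?thesis using \<open>z \<noteq> 0\<close> by (simp add: log_kernel_def norm_divide)
qed

lemma cnj_log_kernel: "z \<notin> \<real>\<^sub>\<le>\<^sub>0 \<Longrightarrow> log_kernel c t (cnj z) = cnj (log_kernel c t z)"
  by (auto simp: log_kernel_def cnj_Ln exp_cnj)

lemma log_kernel_tendsto_boundary:
  assumes "0 < s"
  shows "((\<lambda>e. log_kernel c t (Complex (- s) e)) \<longlongrightarrow> boundary_log_kernel c t s) (at_right 0)"
proof -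
  \<comment> \<open>For \<open>e > 0\<close>, \<open>Log (-s + ie) = Log (s - ie) + i\<pi>\<close>, and the right-hand side is continuous at \<open>e = 0\<close>.\<close>
  define q where "q e = exp (of_real t * Complex (- s) e) / ((Ln (Complex s (- e)) + \<i> * pi) / 2 + of_real c)" for e
  have "log_kernel c t (Complex (- s) e) = q e" if "0 < e" for e
  proof -
    have "Complex (- s) e = - Complex s (- e)" by (simp add: complex_eq_iff)
    hence "Ln (Complex (- s) e) = Ln (- Complex s (- e))" by simp
    also have "\<dots> = Ln (Complex s (- e)) + \<i> * pi"
      using that assms by (subst Ln_minus) (auto simp: complex_eq_iff)
    moreover have "Complex (- s) e \<noteq> 0" using assms by (simp add: complex_eq_iff)
    ultimately show ?thesis by (simp add: log_kernel_def q_def)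
  qed
  hence "eventually (\<lambda>e. q e = log_kernel c t (Complex (- s) e)) (at_right 0)"
    by (auto simp: eventually_at_right_field intro: exI[of _ 1])
  moreover have "Ln (Complex s 0) = of_real (ln s)"
    using Ln_of_real[OF assms] by (simp add: complex_of_real_def)
  hence "isCont q 0"
    using assms unfolding q_def Complex_eq
    by (intro continuous_intros) (auto simp: complex_nonpos_Reals_iff complex_eq_iff)
  hence "(q \<longlongrightarrow> q 0) (at_right 0)"
    by (simp add: isCont_def filterlim_at_split)
  moreover have "q 0 = boundary_log_kernel c t s"
    using assms \<open>Ln (Complex s 0) = _\<close>
    by (simp add: q_def boundary_log_kernel_def ln_sqrt Complex_eq field_simps)
  ultimately show ?thesis by (simp add: tendsto_cong)
qed

lemma log_kernel_tendsto_origin: "((\<lambda>y. log_kernel c t (Complex 0 y)) \<longlongrightarrow> 0) (at_right 0)"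
proof (rule Lim_null_comparison)
  have "eventually (\<lambda>y. 0 < y \<and> ln y / 2 + c < 0) (at_right 0)"
    by (intro eventually_conj eventually_at_right_less) real_asymp
  thus "eventually (\<lambda>y. norm (log_kernel c t (Complex 0 y)) \<le> 1 / \<bar>ln y / 2 + c\<bar>) (at_right 0)"
  proof eventually_elim
    case (elim y)
    hence "Complex 0 y \<noteq> 0" by (simp add: complex_eq_iff)
    have "\<bar>ln y / 2 + c\<bar> = \<bar>Re (Ln (Complex 0 y) / 2 + of_real c)\<bar>"
      using \<open>Complex 0 y \<noteq> 0\<close> elim by (simp add: cmod_def)
    also have "\<dots> \<le> norm (Ln (Complex 0 y) / 2 + of_real c)" by (rule abs_Re_le_cmod)
    finally have "1 / norm (Ln (Complex 0 y) / 2 + of_real c) \<le> 1 / \<bar>ln y / 2 + c\<bar>"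
      using elim by (intro divide_left_mono mult_pos_pos) auto
    thus ?case using \<open>Complex 0 y \<noteq> 0\<close> by (simp add: log_kernel_def norm_divide)
  qed
  show "((\<lambda>y. 1 / \<bar>ln y / 2 + c\<bar>) \<longlongrightarrow> 0) (at_right 0)" by real_asymp
qed

lemma continuous_on_log_kernel_imag_axis: "continuous_on {0..} (\<lambda>y. log_kernel c t (Complex 0 y))"
proof (rule continuous_on_Ici_if_at_right)
  show "continuous_on {0<..} (\<lambda>y. log_kernel c t (Complex 0 y))"
    by (rule continuous_on_log_kernel_comp) (auto simp: Complex_eq intro!: continuous_intros)
  have "log_kernel c t (Complex 0 0) = 0" by (simp add: log_kernel_def complex_eq_iff)
  thus "((\<lambda>y. log_kernel c t (Complex 0 y)) \<longlongrightarrow> log_kernel c t (Complex 0 0)) (at_right 0)"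
    using log_kernel_tendsto_origin by simp
qed

lemma norm_boundary_log_kernel_le: "norm (boundary_log_kernel c t s) \<le> 2 / pi * exp (- (t * s))"
proof -
  let ?D = "of_real (ln (sqrt s)) + \<i> * of_real pi / 2 + of_real c :: complex"
  have "pi / 2 \<le> norm ?D" using abs_Im_le_cmod[of ?D] by simp
  hence "exp (- (t * s)) / norm ?D \<le> exp (- (t * s)) / (pi / 2)"
    using pi_gt_zero by (intro divide_left_mono mult_pos_pos) (auto simp: not_less[symmetric])
  thus ?thesis by (simp add: boundary_log_kernel_def norm_divide norm_exp_eq_Re mult.commute)
qed

lemma integrable_boundary_log_kernel:
  assumes "0 < t" "0 < a"
  shows "boundary_log_kernel c t integrable_on {a..}"
proof (rule integrable_on_Ici_dominated[OF _ norm_boundary_log_kernel_le])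
  show "continuous_on {a..} (boundary_log_kernel c t)"
    unfolding boundary_log_kernel_def using assms
    by (intro continuous_intros) (auto simp: complex_eq_iff)
qed (rule integrable_exp_decay[OF assms(1)])

section \<open>Deforming the contour\<close>

lemma log_kernel_rectangle_identity:
  assumes "0 < X" "0 < d" "d < R"
  shows "integral {0..X} (\<lambda>s. log_kernel c t (Complex (- s) R))
       = \<i> * integral {d..R} (\<lambda>y. log_kernel c t (Complex 0 y))
         - \<i> * integral {d..R} (\<lambda>y. log_kernel c t (Complex (- X) y))
         + integral {0..X} (\<lambda>s. log_kernel c t (Complex (- s) d))"
proof -
  have reflect: "integral {- X..0} g = integral {0..X} (\<lambda>s. g (- s))" for g :: "real \<Rightarrow> complex"
    using Henstock_Kurzweil_Integration.integral_reflect_real[where a = 0 and b = X and f = "\<lambda>s. g (- s)"] by simp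
  have "cbox (Complex (- X) d) (Complex 0 R) \<subseteq> {z. 0 < Im z}"
    using assms by (auto simp: in_cbox_complex_iff)
  from Cauchy_theorem_rectangle_integrals[OF holomorphic_on_log_kernel convex_halfspace_Im_gt this] assms
  have "integral {d..R} (\<lambda>y. log_kernel c t (Complex 0 y)) - integral {d..R} (\<lambda>y. log_kernel c t (Complex (- X) y))
      = - \<i> * (integral {0..X} (\<lambda>s. log_kernel c t (Complex (- s) R))
                - integral {0..X} (\<lambda>s. log_kernel c t (Complex (- s) d)))"
    by (simp add: reflect)
  from arg_cong[OF this, of "(*) \<i>"] show ?thesis by (simp add: algebra_simps)
qed

lemma log_kernel_right_edge_tendsto:
  assumes "d \<longlonglongrightarrow> 0" "\<And>k. 0 \<le> d k" "0 < R"
  shows "(\<lambda>k. integral {d k..R} (\<lambda>y. log_kernel c t (Complex 0 y)))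
           \<longlonglongrightarrow> integral {0..R} (\<lambda>y. log_kernel c t (Complex 0 y))"
proof -
  have "(\<lambda>y. log_kernel c t (Complex 0 y)) integrable_on {0..R}"
    by (rule integrable_continuous_interval, rule continuous_on_subset[OF continuous_on_log_kernel_imag_axis]) auto
  hence "continuous_on {0..R} (\<lambda>x. integral {x..R} (\<lambda>y. log_kernel c t (Complex 0 y)))"
    by (rule indefinite_integral_continuous_1')
  moreover have "eventually (\<lambda>k. d k < R) sequentially"
    using assms by (intro order_tendstoD(2)) auto
  hence "eventually (\<lambda>k. d k \<in> {0..R}) sequentially"
    by eventually_elim (use assms(2) in auto)
  ultimately show ?thesis
    using assms by (intro continuous_on_tendsto_compose[where f = "\<lambda>x. integral {x..R} _"]) auto
qed

lemma log_kernel_left_edge_tendsto_0: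
  assumes "0 < t" "\<And>k. 0 < d k" "0 \<le> R" "filterlim X at_top sequentially"
  shows "(\<lambda>k. integral {d k..R} (\<lambda>y. log_kernel c t (Complex (- X k) y))) \<longlonglongrightarrow> 0"
proof (rule Lim_null_comparison)
  have "norm (integral {d k..R} (\<lambda>y. log_kernel c t (Complex (- X k) y))) \<le> 4 / pi * exp (- (t * X k)) * R"
    if "0 \<le> X k" for k
  proof (cases "d k \<le> R")
    case True
    have "((\<lambda>y. log_kernel c t (Complex (- X k) y)) has_integral
            integral {d k..R} (\<lambda>y. log_kernel c t (Complex (- X k) y))) {d k..R}"
      using assms(2)[of k] by (intro integrable_integral integrable_continuous_interval continuous_on_log_kernel_vertical)
        auto
    hence "norm (integral {d k..R} (\<lambda>y. log_kernel c t (Complex (- X k) y)))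
        \<le> 4 / pi * exp (- (t * X k)) * measure lborel {d k..R}"
      using that assms(2)[of k] norm_log_kernel_second_quadrant_le
      by (intro has_integral_bound_real) auto
    also have "\<dots> \<le> 4 / pi * exp (- (t * X k)) * R"
      using True assms(2)[of k] by (intro mult_left_mono) auto
    finally show ?thesis .
  qed (use assms(3) in auto)
  thus "eventually (\<lambda>k. norm (integral {d k..R} (\<lambda>y. log_kernel c t (Complex (- X k) y)))
      \<le> 4 / pi * exp (- (t * X k)) * R) sequentially"
    using filterlim_at_top[THEN iffD1, OF assms(4), rule_format, of 0] by (auto elim: eventually_mono)
  have "((\<lambda>x. 4 / pi * exp (- (t * x)) * R) \<longlongrightarrow> 0) at_top"
    using assms(1) by real_asymp
  thus "(\<lambda>k. 4 / pi * exp (- (t * X k)) * R) \<longlonglongrightarrow> 0"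
    by (rule filterlim_compose[OF _ assms(4)])
qed

lemma log_kernel_tendsto_boundary_extended:
  assumes "filterlim d (at_right 0) F" "0 \<le> s"
  shows "((\<lambda>k. log_kernel c t (Complex (- s) (d k))) \<longlongrightarrow>
           (if s = 0 then 0 else boundary_log_kernel c t s)) F"
proof (cases "s = 0")
  case True
  thus ?thesis using filterlim_compose[OF log_kernel_tendsto_origin assms(1)] by simp
next
  case False
  thus ?thesis using assms filterlim_compose[OF log_kernel_tendsto_boundary assms(1)] by simp
qed

lemma log_kernel_bottom_edge_tendsto:
  assumes "0 < t" "d \<longlonglongrightarrow> 0" "\<And>k. 0 < d k" "filterlim X at_top sequentially"
  shows "boundary_log_kernel c t integrable_on {0..}"
    and "(\<lambda>k. integral {0..X k} (\<lambda>s. log_kernel c t (Complex (- s) (d k))))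
           \<longlonglongrightarrow> integral {0..} (boundary_log_kernel c t)"
proof -
  define F where "F k s = (if s \<le> X k then log_kernel c t (Complex (- s) (d k)) else 0)" for k s
  define G where "G s = (if s = 0 then 0 else boundary_log_kernel c t s)" for s
  have dom: "{..X k} \<inter> {0..} = {0..X k}" for k by auto
  have F_int: "F k integrable_on {0..}" for k
    unfolding F_def atMost_iff[symmetric] integrable_restrict_Int dom
    by (rule integrable_continuous_interval, rule continuous_on_log_kernel_horizontal) (rule assms(3))
  have F_bound: "norm (F k s) \<le> 4 / pi * exp (- (t * s))" if "s \<in> {0..}" for k s
    using norm_log_kernel_second_quadrant_le[of s "d k"] that assms(3) by (simp add: F_def)
  have F_lim: "(\<lambda>k. F k s) \<longlonglongrightarrow> G s" if "s \<in> {0..}" for s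
  proof -
    have "eventually (\<lambda>k. F k s = log_kernel c t (Complex (- s) (d k))) sequentially"
      using filterlim_at_top[THEN iffD1, OF assms(4), rule_format, of s] by eventually_elim (simp add: F_def)
    moreover have "filterlim d (at_right 0) sequentially"
      using assms(2,3) by (intro tendsto_imp_filterlim_at_right) auto
    hence "(\<lambda>k. log_kernel c t (Complex (- s) (d k))) \<longlonglongrightarrow> G s"
      unfolding G_def by (rule log_kernel_tendsto_boundary_extended) (use that in simp)
    ultimately show ?thesis by (simp add: tendsto_cong)
  qed
  have limit: "G integrable_on {0..}" "(\<lambda>k. integral {0..} (F k)) \<longlonglongrightarrow> integral {0..} G"
    using dominated_convergence[OF F_int integrable_exp_decay[OF assms(1)] F_bound F_lim] by auto
  have spike: "s \<in> {0..} - {0} \<Longrightarrow> boundary_log_kernel c t s = G s" for s by (simp add: G_def)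
  show "boundary_log_kernel c t integrable_on {0..}"
    using integrable_spike[OF limit(1) negligible_sing spike] .
  have "integral {0..} (F k) = integral {0..X k} (\<lambda>s. log_kernel c t (Complex (- s) (d k)))" for k
    unfolding F_def atMost_iff[symmetric] integral_restrict_Int dom ..
  moreover have "integral {0..} G = integral {0..} (boundary_log_kernel c t)"
    by (rule integral_spike[OF negligible_sing spike])
  ultimately show "(\<lambda>k. integral {0..X k} (\<lambda>s. log_kernel c t (Complex (- s) (d k))))
      \<longlonglongrightarrow> integral {0..} (boundary_log_kernel c t)"
    using limit(2) by simp
qed

lemma norm_log_kernel_top_edge_integral_le:
  assumes "0 < t" "0 < R" "0 < ln R / 2 + c"
  shows "norm (integral {0..X} (\<lambda>s. log_kernel c t (Complex (- s) R))) \<le> 1 / (t * (ln R / 2 + c))"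
proof -
  have "((\<lambda>s. exp (- (t * s))) has_integral 1 / t) {0..}"
    using has_integral_exp_minus_to_infinity[OF assms(1), of 0] by simp
  from has_integral_divide[OF this, of "ln R / 2 + c"]
  have decay: "((\<lambda>s. exp (- (t * s)) / (ln R / 2 + c)) has_integral 1 / (t * (ln R / 2 + c))) {0..}"
    by simp
  have "norm (integral {0..X} (\<lambda>s. log_kernel c t (Complex (- s) R)))
          \<le> integral {0..X} (\<lambda>s. exp (- (t * s)) / (ln R / 2 + c))"
  proof (rule Henstock_Kurzweil_Integration.integral_norm_bound_integral)
    fix s assume "s \<in> {0..X}"
    have "R \<le> norm (Complex (- s) R)" using abs_Im_le_cmod[of "Complex (- s) R"] by simp
    from norm_log_kernel_le_far[OF assms(2) this assms(3)]
    show "norm (log_kernel c t (Complex (- s) R)) \<le> exp (- (t * s)) / (ln R / 2 + c)" by simp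
  qed (use assms in \<open>auto intro!: integrable_continuous_interval continuous_on_log_kernel_horizontal continuous_intros\<close>)
  also have "\<dots> \<le> integral {0..} (\<lambda>s. exp (- (t * s)) / (ln R / 2 + c))"
    using decay assms(3) by (intro integral_subset_le integrable_continuous_interval continuous_intros)
      (auto simp: integrable_on_def)
  also have "\<dots> = 1 / (t * (ln R / 2 + c))" using decay by (rule integral_unique)
  finally show ?thesis .
qed

lemma norm_imag_axis_integral_add_boundary_le:
  assumes "0 < t" "0 < R" "0 < ln R / 2 + c"
  shows "norm (\<i> * integral {0..R} (\<lambda>y. log_kernel c t (Complex 0 y)) + integral {0..} (boundary_log_kernel c t))
           \<le> 1 / (t * (ln R / 2 + c))"
proof (rule Lim_norm_ubound)
  \<comment> \<open>Rectangles with corners \<open>-X k + i d k\<close> and \<open>iR\<close>; only the top edge does not converge, but it stays bounded.\<close>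
  define d where "d k = R / (real k + 2)" for k
  define X where "X k = real k + 1" for k
  have d: "0 < d k" "d k < R" for k
    using assms(2) by (auto simp: d_def field_simps intro: add_pos_nonneg)
  have "d \<longlonglongrightarrow> 0" unfolding d_def by real_asymp
  moreover have "filterlim X at_top sequentially" unfolding X_def by real_asymp
  ultimately have "(\<lambda>k. \<i> * integral {d k..R} (\<lambda>y. log_kernel c t (Complex 0 y))
         - \<i> * integral {d k..R} (\<lambda>y. log_kernel c t (Complex (- X k) y))
         + integral {0..X k} (\<lambda>s. log_kernel c t (Complex (- s) (d k))))
      \<longlonglongrightarrow> \<i> * integral {0..R} (\<lambda>y. log_kernel c t (Complex 0 y)) - \<i> * 0 + integral {0..} (boundary_log_kernel c t)"
    using assms d by (intro tendsto_intros log_kernel_right_edge_tendsto log_kernel_left_edge_tendsto_0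
        log_kernel_bottom_edge_tendsto(2)) (auto intro: less_imp_le)
  moreover have "0 < X k" for k by (simp add: X_def)
  hence "integral {0..X k} (\<lambda>s. log_kernel c t (Complex (- s) R))
       = \<i> * integral {d k..R} (\<lambda>y. log_kernel c t (Complex 0 y))
         - \<i> * integral {d k..R} (\<lambda>y. log_kernel c t (Complex (- X k) y))
         + integral {0..X k} (\<lambda>s. log_kernel c t (Complex (- s) (d k)))" for k
    using d by (intro log_kernel_rectangle_identity)
  ultimately show "(\<lambda>k. integral {0..X k} (\<lambda>s. log_kernel c t (Complex (- s) R)))
      \<longlonglongrightarrow> \<i> * integral {0..R} (\<lambda>y. log_kernel c t (Complex 0 y)) + integral {0..} (boundary_log_kernel c t)"
    by simp
  show "eventually (\<lambda>k. norm (integral {0..X k} (\<lambda>s. log_kernel c t (Complex (- s) R))) \<le> 1 / (t * (ln R / 2 + c)))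
          sequentially"
    using norm_log_kernel_top_edge_integral_le[OF assms] by simp
qed simp

lemma K_partial_eq_Im:
  assumes "0 \<le> R"
  shows "K_partial \<theta> t R = of_real (Im (\<i> * integral {0..R} (\<lambda>y. log_kernel (kappa \<theta>) t (Complex 0 y))) / pi)"
proof -
  define \<phi> where "\<phi> = (\<lambda>y. log_kernel (kappa \<theta>) t (\<i> * of_real y) * \<i>)"
  define w where "w = \<i> * integral {0..R} (\<lambda>y. log_kernel (kappa \<theta>) t (Complex 0 y))"
  have "(\<lambda>y. log_kernel (kappa \<theta>) t (Complex 0 y)) integrable_on {0..R}"
    by (rule integrable_continuous_interval, rule continuous_on_subset[OF continuous_on_log_kernel_imag_axis]) auto
  from has_integral_mult_right[OF integrable_integral[OF this], of "\<i>"]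
  have right: "(\<phi> has_integral w) {0..R}"
    by (simp add: w_def \<phi>_def Complex_eq mult.commute)
  have "\<phi> (- y) = - cnj (\<phi> y)" if "0 \<le> y" for y
  proof (cases "y = 0")
    case False
    hence "\<i> * of_real y \<notin> \<real>\<^sub>\<le>\<^sub>0" using that by (auto simp: complex_nonpos_Reals_iff)
    thus ?thesis using cnj_log_kernel[of "\<i> * of_real y" "kappa \<theta>" t] by (simp add: \<phi>_def)
  qed (simp add: \<phi>_def log_kernel_def)
  hence "((\<lambda>y. \<phi> (- y)) has_integral - cnj w) {0..R}"
    using has_integral_neg[OF has_integral_cnj[THEN iffD2, OF right]] by (auto intro: has_integral_eq)
  hence left: "(\<phi> has_integral - cnj w) {- R..0}"
    using has_integral_reflect_real[where f = \<phi> and a = "- R" and b = 0] by simp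
  have "(\<phi> has_integral (- cnj w + w)) {- R..R}"
    using has_integral_combine[OF _ _ left right] assms by simp
  hence "integral {- R..R} \<phi> = w - cnj w" by (simp add: integral_unique)
  hence "K_partial \<theta> t R = 1 / (2 * of_real pi * \<i>) * (w - cnj w)"
    unfolding K_partial_def K_integrand_eq_log_kernel \<phi>_def by simp
  also have "\<dots> = of_real (Im w / pi)" by (simp add: complex_diff_cnj)
  finally show ?thesis by (simp add: w_def)
qed

section \<open>The smooth remainder\<close>

text \<open>\<open>-Im (boundary_log_kernel c t s) / (2\<pi> e\<^sup>-\<^sup>t\<^sup>s)\<close> for \<open>s > 0\<close>, extended by its limit 0 at \<open>s = 0\<close>.\<close>
definition boundary_density :: "real \<Rightarrow> real \<Rightarrow> real" where
  "boundary_density c s = (if s \<le> 0 then 0 else 1 / ((ln s + 2 * c)\<^sup>2 + pi\<^sup>2))"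

lemma boundary_density_bounds: "0 \<le> boundary_density c s" "boundary_density c s \<le> 1"
proof -
  have "1 \<le> pi\<^sup>2" using pi_ge_two by (intro one_le_power) simp
  hence "1 \<le> (ln s + 2 * c)\<^sup>2 + pi\<^sup>2" by (smt (verit) zero_le_power2)
  thus "0 \<le> boundary_density c s" "boundary_density c s \<le> 1" by (auto simp: boundary_density_def)
qed

lemma continuous_on_boundary_density: "continuous_on {0..} (boundary_density c)"
proof (rule continuous_on_Ici_if_at_right)
  have "(ln s + 2 * c)\<^sup>2 + pi\<^sup>2 \<noteq> 0" for s
    using pi_gt_zero by (smt (verit) zero_le_power2 zero_less_power2)
  hence "continuous_on {0<..} (\<lambda>s. 1 / ((ln s + 2 * c)\<^sup>2 + pi\<^sup>2))"
    by (intro continuous_intros) auto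
  thus "continuous_on {0<..} (boundary_density c)"
    by (rule continuous_on_cong[THEN iffD1, rotated 2]) (auto simp: boundary_density_def)
  have "((\<lambda>s. 1 / ((ln s + 2 * c)\<^sup>2 + pi\<^sup>2)) \<longlongrightarrow> 0) (at_right 0)" by real_asymp
  moreover have "eventually (\<lambda>s. 1 / ((ln s + 2 * c)\<^sup>2 + pi\<^sup>2) = boundary_density c s) (at_right 0)"
    by (auto simp: eventually_at_right_field boundary_density_def intro: exI[of _ 1])
  ultimately have "(boundary_density c \<longlongrightarrow> 0) (at_right 0)"
    by (rule Lim_transform_eventually)
  thus "(boundary_density c \<longlongrightarrow> boundary_density c 0) (at_right 0)"
    by (simp add: boundary_density_def[of c 0])
qed

lemma Im_boundary_log_kernel:
  assumes "0 < s"
  shows "- (1 / pi) * Im (boundary_log_kernel c t s) = 2 * (exp (- (t * s)) * boundary_density c s)"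
proof -
  have "of_real (ln (sqrt s)) + \<i> * of_real pi / 2 + of_real c = Complex (ln s / 2 + c) (pi / 2)"
    using assms by (simp add: complex_eq_iff ln_sqrt)
  moreover have "exp (- of_real (t * s)) = (of_real (exp (- (t * s))) :: complex)"
    by (simp flip: exp_of_real)
  ultimately have "Im (boundary_log_kernel c t s) = - (exp (- (t * s)) * (pi / 2)) / ((ln s / 2 + c)\<^sup>2 + (pi / 2)\<^sup>2)"
    by (simp add: boundary_log_kernel_def Im_divide power2_eq_square)
  thus ?thesis
    using assms pi_gt_zero by (simp add: boundary_density_def power2_eq_square field_simps)
qed

lemma integral_Im_boundary_log_kernel:
  assumes "boundary_log_kernel c t integrable_on S" "S \<subseteq> {0..}"
  shows "- (1 / pi) * Im (integral S (boundary_log_kernel c t))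
           = 2 * integral S (\<lambda>s. exp (- (t * s)) * boundary_density c s)"
proof -
  have "((\<lambda>s. - (1 / pi) * Im (boundary_log_kernel c t s)) has_integral
          - (1 / pi) * Im (integral S (boundary_log_kernel c t))) S"
    by (intro has_integral_mult_right has_integral_Im integrable_integral assms(1))
  hence "((\<lambda>s. 2 * (exp (- (t * s)) * boundary_density c s)) has_integral
          - (1 / pi) * Im (integral S (boundary_log_kernel c t))) S"
  proof (rule has_integral_spike[OF negligible_sing[of 0], rotated])
    fix s assume "s \<in> S - {0}"
    hence "0 < s" using assms(2) by force
    thus "2 * (exp (- (t * s)) * boundary_density c s) = - (1 / pi) * Im (boundary_log_kernel c t s)"
      by (rule Im_boundary_log_kernel[symmetric])
  qed
  from integral_unique[OF this] show ?thesis by simp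
qed

lemma Im_integral_boundary_log_kernel_tail:
  assumes "0 < t"
  shows "- (1 / pi) * Im (integral {1..} (boundary_log_kernel c t))
           = 2 * integral {1..} (\<lambda>y. exp (- (t * y)) / ((ln y + 2 * c)\<^sup>2 + pi\<^sup>2))"
proof -
  have "- (1 / pi) * Im (integral {1..} (boundary_log_kernel c t))
          = 2 * integral {1..} (\<lambda>y. exp (- (t * y)) * boundary_density c y)"
    by (rule integral_Im_boundary_log_kernel[OF integrable_boundary_log_kernel[OF assms zero_less_one]]) auto
  also have "\<dots> = 2 * integral {1..} (\<lambda>y. exp (- (t * y)) / ((ln y + 2 * c)\<^sup>2 + pi\<^sup>2))"
    by (intro arg_cong[where f = "(*) 2"] integral_cong) (simp add: boundary_density_def)
  finally show ?thesis .
qed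

text \<open>\<open>K1_deriv c n\<close> is the \<open>n\<close>-th derivative of \<open>K\<^sup>1 = K1_deriv c 0\<close>.\<close>
definition K1_deriv :: "real \<Rightarrow> nat \<Rightarrow> real \<Rightarrow> real" where
  "K1_deriv c n t = 2 * integral {0..1} (\<lambda>s. (- s) ^ n * exp (- (t * s)) * boundary_density c s)"

lemma continuous_on_boundary_density_01: "continuous_on {0..1} (boundary_density c)"
  by (rule continuous_on_subset[OF continuous_on_boundary_density]) auto

lemma K1_deriv_has_derivative:
  assumes "0 \<le> t"
  shows "(K1_deriv c n has_real_derivative K1_deriv c (Suc n) t) (at t within {0..})"
proof -
  have "((\<lambda>x. integral (cbox 0 1) (\<lambda>s. (- s) ^ n * exp (- (x * s)) * boundary_density c s))
          has_field_derivative integral (cbox 0 1) (\<lambda>s. (- s) ^ Suc n * exp (- (t * s)) * boundary_density c s))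
        (at t within {0..})"
  proof (rule leibniz_rule_field_derivative)
    fix x s :: real
    show "((\<lambda>x. (- s) ^ n * exp (- (x * s)) * boundary_density c s) has_field_derivative
            (- s) ^ Suc n * exp (- (x * s)) * boundary_density c s) (at x within {0..})"
      by (auto intro!: derivative_eq_intros simp: algebra_simps)
  next
    fix x :: real
    show "(\<lambda>s. (- s) ^ n * exp (- (x * s)) * boundary_density c s) integrable_on cbox 0 1"
      by (auto intro!: integrable_continuous_interval continuous_intros continuous_on_boundary_density_01)
  next
    have "continuous_on ({0..} \<times> {0..1}) (\<lambda>p. boundary_density c (snd p))"
      by (rule continuous_on_compose2[OF continuous_on_boundary_density_01]) (auto intro!: continuous_intros)
    thus "continuous_on ({0..} \<times> cbox 0 1) (\<lambda>(x, s). (- s) ^ Suc n * exp (- (x * s)) * boundary_density c s)"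
      by (auto simp: case_prod_beta intro!: continuous_intros)
  qed (use assms in auto)
  from DERIV_cmult[OF this, of 2] show ?thesis
    unfolding K1_deriv_def[abs_def] cbox_interval by simp
qed

lemma abs_K1_deriv_0_le: "0 \<le> t \<Longrightarrow> \<bar>K1_deriv c 0 t\<bar> \<le> 2"
proof -
  assume "0 \<le> t"
  have "norm (integral {0..1} (\<lambda>s. exp (- (t * s)) * boundary_density c s)) \<le> integral {0..1} (\<lambda>s::real. 1::real)"
  proof (rule Henstock_Kurzweil_Integration.integral_norm_bound_integral)
    fix s :: real assume "s \<in> {0..1}"
    thus "norm (exp (- (t * s)) * boundary_density c s) \<le> 1"
      using \<open>0 \<le> t\<close> boundary_density_bounds[of c s] by (simp add: abs_mult mult_le_one)
  qed (auto intro!: integrable_continuous_interval continuous_intros continuous_on_boundary_density_01)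
  thus ?thesis by (simp add: K1_deriv_def)
qed

section \<open>Convergence of the partial integrals\<close>

lemma Im_integral_boundary_log_kernel_split:
  assumes "0 < t"
  shows "- (1 / pi) * Im (integral {0..} (boundary_log_kernel c t))
           = - (1 / pi) * Im (integral {1..} (boundary_log_kernel c t)) + K1_deriv c 0 t"
proof -
  have "boundary_log_kernel c t integrable_on {0..}"
    using log_kernel_bottom_edge_tendsto(1)[OF assms LIMSEQ_inverse_real_of_nat _ filterlim_real_sequentially]
    by simp
  hence unit: "boundary_log_kernel c t integrable_on {0..1}"
    by (rule integrable_on_subinterval) auto
  have "{0..} = {0..1} \<union> {1::real..}" by auto
  hence "integral {0..} (boundary_log_kernel c t)
      = integral ({0..1} \<union> {1..}) (boundary_log_kernel c t)" by simp
  also have "\<dots> = integral {0..1} (boundary_log_kernel c t) + integral {1..} (boundary_log_kernel c t)"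
    using unit integrable_boundary_log_kernel[OF assms zero_less_one] by (intro integral_Un) auto
  finally show ?thesis
    using integral_Im_boundary_log_kernel[OF unit] by (simp add: K1_deriv_def algebra_simps)
qed

lemma K_partial_tendsto:
  assumes "0 < t"
  shows "((\<lambda>R. K_partial \<theta> t R) \<longlongrightarrow>
           of_real (- (1 / pi) * Im (integral {1..} (boundary_log_kernel (kappa \<theta>) t)) + K1_deriv (kappa \<theta>) 0 t))
         at_top"
proof -
  define c where "c = kappa \<theta>"
  define J where "J = integral {0..} (boundary_log_kernel c t)"
  define A where "A R = integral {0..R} (\<lambda>y. log_kernel c t (Complex 0 y))" for R
  have "norm (K_partial \<theta> t R - of_real (- (1 / pi) * Im J)) \<le> 1 / (t * (ln R / 2 + c)) / pi"
    if "0 < R" "0 < ln R / 2 + c" for R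
  proof -
    have "K_partial \<theta> t R - of_real (- (1 / pi) * Im J) = of_real (Im (\<i> * A R + J) / pi)"
      using K_partial_eq_Im[of R \<theta> t] that by (simp add: A_def c_def add_divide_distrib)
    also have "norm \<dots> = \<bar>Im (\<i> * A R + J)\<bar> / pi"
      by (simp only: norm_of_real abs_divide abs_of_pos[OF pi_gt_zero])
    also have "\<dots> \<le> norm (\<i> * A R + J) / pi"
      by (intro divide_right_mono abs_Im_le_cmod) simp
    also have "\<dots> \<le> 1 / (t * (ln R / 2 + c)) / pi"
      using norm_imag_axis_integral_add_boundary_le[OF assms that]
      by (intro divide_right_mono) (simp_all add: A_def J_def)
    finally show ?thesis .
  qed
  moreover have "eventually (\<lambda>R. 0 < R \<and> 0 < ln R / 2 + c) at_top"
    by (intro eventually_conj eventually_gt_at_top) real_asymp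
  ultimately have "eventually (\<lambda>R. norm (K_partial \<theta> t R - of_real (- (1 / pi) * Im J))
      \<le> 1 / (t * (ln R / 2 + c)) / pi) at_top"
    by (auto elim: eventually_mono)
  moreover have "((\<lambda>R. 1 / (t * (ln R / 2 + c)) / pi) \<longlongrightarrow> 0) at_top"
    using assms by real_asymp
  ultimately have "((\<lambda>R. K_partial \<theta> t R - of_real (- (1 / pi) * Im J)) \<longlongrightarrow> 0) at_top"
    by (rule Lim_null_comparison)
  from tendsto_add[OF this tendsto_const[of "of_real (- (1 / pi) * Im J)"]]
  have "((\<lambda>R. K_partial \<theta> t R) \<longlongrightarrow> of_real (- (1 / pi) * Im J)) at_top" by simp
  thus ?thesis unfolding J_def Im_integral_boundary_log_kernel_split[OF assms] c_def .
qed

theorem proposition5p1: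
  fixes \<theta> :: real
  assumes "0 \<le> \<theta>" and "\<theta> < pi" and "\<theta> \<noteq> pi / 2"
  shows "\<exists>K1 :: real \<Rightarrow> real. \<exists>D :: nat \<Rightarrow> real \<Rightarrow> real.
           D 0 = K1 \<and>
           (\<forall>n. \<forall>t \<ge> 0. (D n has_real_derivative D (Suc n) t) (at t within {0..})) \<and>
           (\<exists>B. \<forall>t \<ge> 0. \<bar>K1 t\<bar> \<le> B) \<and>
           (\<forall>t > 0.
              ((\<lambda>R. K_partial \<theta> t R) \<longlongrightarrow>
                 complex_of_real (- (1 / pi) * Im (integral {1..} (\<lambda>y::real.
                    exp (- of_real (t * y)) /
                    (of_real (ln (sqrt y)) + \<i> * of_real pi / 2 + of_real (kappa \<theta>))))
                  + K1 t)) at_top \<and>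
              - (1 / pi) * Im (integral {1..} (\<lambda>y::real.
                    exp (- of_real (t * y)) /
                    (of_real (ln (sqrt y)) + \<i> * of_real pi / 2 + of_real (kappa \<theta>))))
                  + K1 t
              = 2 * integral {1..} (\<lambda>y::real.
                    exp (- (t * y)) / ((ln y + 2 * kappa \<theta>)\<^sup>2 + pi\<^sup>2)) + K1 t)"
proof -
  let ?c = "kappa \<theta>"
  have "\<forall>n. \<forall>t \<ge> 0. (K1_deriv ?c n has_real_derivative K1_deriv ?c (Suc n) t) (at t within {0..})"
    using K1_deriv_has_derivative by blast
  moreover have "\<forall>t \<ge> 0. \<bar>K1_deriv ?c 0 t\<bar> \<le> 2"
    using abs_K1_deriv_0_le by blast
  moreover have "\<forall>t > 0. ((\<lambda>R. K_partial \<theta> t R) \<longlongrightarrow>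
      of_real (- (1 / pi) * Im (integral {1..} (boundary_log_kernel ?c t)) + K1_deriv ?c 0 t)) at_top"
    using K_partial_tendsto by blast
  moreover have "\<forall>t > 0. - (1 / pi) * Im (integral {1..} (boundary_log_kernel ?c t)) + K1_deriv ?c 0 t
      = 2 * integral {1..} (\<lambda>y. exp (- (t * y)) / ((ln y + 2 * ?c)\<^sup>2 + pi\<^sup>2)) + K1_deriv ?c 0 t"
    using Im_integral_boundary_log_kernel_tail by auto
  ultimately show ?thesis
    unfolding boundary_log_kernel_def by blast
qed

end
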